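(* In the calculus $\lambda^{RE}$ described in the context: if $e_1\Rrightarrow^*e_2$, then for every constant $c$, $e_1\to^*c$ if and only if $e_2\to^*c$.
   Context: Syntax of $\lambda^{RE}$. Basic types $b ::= \mathsf{Bool}\mid\mathsf{Unit}$. Constants $c ::= \mathsf{true}\mid\mathsf{false}\mid\mathsf{unit}\mid (=_b)\mid (=_{(c,b)})$. Expressions $e ::= c\mid x\mid e\ e\mid \lambda x{:}\tau.\,e\mid \mathsf{BEq}_b\ e\ e\ e\mid \mathsf{XEq}_{x:\tau\to\tau}\ e\ e\ e$. Values $v ::= c\mid \lambda x{:}\tau.\,e\mid \mathsf{BEq}_b\ e\ e\ v\mid \mathsf{XEq}_{x:\tau\to\tau}\ e\ e\ v$. Types $\tau ::= \{x{:}b\mid e\}\mid x{:}\tau\to\tau\mid \mathsf{PEq}_{\tau}\{e\}\{e\}$. $e[x:=e']$ is capture-avoiding substitution. Reduction: evaluation contexts $E ::= \bullet\mid E\ e\mid v\ E\mid \mathsf{BEq}_b\ e\ e\ E\mid\mathsf{XEq}_{x:\tau\to\tau}\ e\ e\ E$; $E[e]\to E[e']$ if $e\to e'$; $(\lambda x{:}\tau.\,e)\ v\to e[x:=v]$; $(=_b)\ c_1\to(=_{(c_1,b)})$; $(=_{(c_1,b)})\ c_2\to\mathsf{true}$ if $c_1,c_2$ syntactically equal, else $\to\mathsf{false}$. $\to^*$ is the reflexive–transitive closure. Parallel reduction $e\Rrightarrow e'$ and $\tau\Rrightarrow\tau'$ is defined inductively: $x\Rrightarrow x$; $c\Rrightarrow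 c$; $\lambda x{:}\tau.e\Rrightarrow\lambda x{:}\tau'.e'$ if $\tau\Rrightarrow\tau'$, $e\Rrightarrow e'$; $e_1\ e_2\Rrightarrow e_1'\ e_2'$ if $e_i\Rrightarrow e_i'$; $(\lambda x{:}\tau.e)\ v\Rrightarrow e'[x:=v']$ if $e\Rrightarrow e'$ and $v\Rrightarrow v'$; $(=_b)\ c_1\Rrightarrow(=_{(c_1,b)})$; $(=_{(c_1,b)})\ c_2\Rrightarrow d$ where $d=\mathsf{true}$ if $c_1,c_2$ are syntactically equal and $\mathsf{false}$ otherwise; $\mathsf{BEq}_b\ e_l\ e_r\ e\Rrightarrow\mathsf{BEq}_b\ e_l'\ e_r'\ e'$ if $e_l\Rrightarrow e_l'$, $e_r\Rrightarrow e_r'$, $e\Rrightarrow e'$; $\mathsf{XEq}_{x:\tau_x\to\tau}\ e_l\ e_r\ e\Rrightarrow\mathsf{XEq}_{x:\tau_x'\to\tau'}\ e_l'\ e_r'\ e'$ if all five components parallel reduce; on types: $\{x{:}b\mid r\}\Rrightarrow\{x{:}b\mid r'\}$ if $r\Rrightarrow r'$; $x{:}\tau_x\to\tau\Rrightarrow x{:}\tau_x'\to\tau'$ if $\tau_x\Rrightarrow\tau_x'$, $\tau\Rrightarrow\tau'$; $\mathsf{PEq}_\tau\{e_l\}\{e_r\}\Rrightarrow\mathsf{PEq}_{\tau'}\{e_l'\}\{e_r'\}$ if all components parallel reduce. $\Rrightarrow^*$ is the reflexive–transitive closure of $\Rrightarrow$. *)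

theory Defs
  imports Main
begin

datatype basic = BBool | BUnit

datatype const =
    CTrue | CFalse | CUnit
  | CEq basic
  | CEqC const basic

(* Binders: Lam t e binds in e; TRef b r binds in r; TFun tx t binds in t;
   XEq tx t el er e binds in t only. *)
datatype expr =
    Const const
  | Var nat
  | App expr expr
  | Lam ty expr
  | BEq basic expr expr expr
  | XEq ty ty expr expr expr
and ty =
    TRef basic expr
  | TFun ty ty
  | PEq ty expr expr

primrec lift_e :: "nat \<Rightarrow> expr \<Rightarrow> expr" and lift_t :: "nat \<Rightarrow> ty \<Rightarrow> ty" where
  "lift_e k (Const c) = Const c"
| "lift_e k (Var i) = (if i < k then Var i else Var (Suc i))"
| "lift_e k (App e1 e2) = App (lift_e k e1) (lift_e k e2)"
| "lift_e k (Lam t e) = Lam (lift_t k t) (lift_e (Suc k) e)"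
| "lift_e k (BEq b l r e) = BEq b (lift_e k l) (lift_e k r) (lift_e k e)"
| "lift_e k (XEq tx t l r e) =
     XEq (lift_t k tx) (lift_t (Suc k) t) (lift_e k l) (lift_e k r) (lift_e k e)"
| "lift_t k (TRef b r) = TRef b (lift_e (Suc k) r)"
| "lift_t k (TFun tx t) = TFun (lift_t k tx) (lift_t (Suc k) t)"
| "lift_t k (PEq t l r) = PEq (lift_t k t) (lift_e k l) (lift_e k r)"

primrec subst_e :: "nat \<Rightarrow> expr \<Rightarrow> expr \<Rightarrow> expr"
  and subst_t :: "nat \<Rightarrow> expr \<Rightarrow> ty \<Rightarrow> ty" where
  "subst_e k s (Const c) = Const c"
| "subst_e k s (Var i) = (if i < k then Var i else if i = k then s else Var (i - 1))"
| "subst_e k s (App e1 e2) = App (subst_e k s e1) (subst_e k s e2)"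
| "subst_e k s (Lam t e) = Lam (subst_t k s t) (subst_e (Suc k) (lift_e 0 s) e)"
| "subst_e k s (BEq b l r e) = BEq b (subst_e k s l) (subst_e k s r) (subst_e k s e)"
| "subst_e k s (XEq tx t l r e) =
     XEq (subst_t k s tx) (subst_t (Suc k) (lift_e 0 s) t)
         (subst_e k s l) (subst_e k s r) (subst_e k s e)"
| "subst_t k s (TRef b r) = TRef b (subst_e (Suc k) (lift_e 0 s) r)"
| "subst_t k s (TFun tx t) = TFun (subst_t k s tx) (subst_t (Suc k) (lift_e 0 s) t)"
| "subst_t k s (PEq t l r) = PEq (subst_t k s t) (subst_e k s l) (subst_e k s r)"

definition inst :: "expr \<Rightarrow> expr \<Rightarrow> expr" where
  "inst e v = subst_e 0 v e"

inductive is_value :: "expr \<Rightarrow> bool" where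
  "is_value (Const c)"
| "is_value (Lam t e)"
| "is_value v \<Longrightarrow> is_value (BEq b l r v)"
| "is_value v \<Longrightarrow> is_value (XEq tx t l r v)"

definition eq_result :: "const \<Rightarrow> const \<Rightarrow> const" where
  "eq_result c1 c2 = (if c1 = c2 then CTrue else CFalse)"

section \<open>Small-step reduction (evaluation contexts as congruence rules)\<close>

inductive step :: "expr \<Rightarrow> expr \<Rightarrow> bool" where
  step_app1: "step e e' \<Longrightarrow> step (App e e2) (App e' e2)"
| step_app2: "is_value v \<Longrightarrow> step e e' \<Longrightarrow> step (App v e) (App v e')"
| step_beq: "step e e' \<Longrightarrow> step (BEq b l r e) (BEq b l r e')"
| step_xeq: "step e e' \<Longrightarrow> step (XEq tx t l r e) (XEq tx t l r e')"
| step_beta: "is_value v \<Longrightarrow> step (App (Lam t e) v) (inst e v)"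
| step_eq1: "step (App (Const (CEq b)) (Const c1)) (Const (CEqC c1 b))"
| step_eq2: "step (App (Const (CEqC c1 b)) (Const c2)) (Const (eq_result c1 c2))"

inductive par_e :: "expr \<Rightarrow> expr \<Rightarrow> bool" and par_t :: "ty \<Rightarrow> ty \<Rightarrow> bool" where
  par_var: "par_e (Var x) (Var x)"
| par_const: "par_e (Const c) (Const c)"
| par_lam: "par_t t t' \<Longrightarrow> par_e e e' \<Longrightarrow> par_e (Lam t e) (Lam t' e')"
| par_app: "par_e e1 e1' \<Longrightarrow> par_e e2 e2' \<Longrightarrow> par_e (App e1 e2) (App e1' e2')"
| par_beta: "is_value v \<Longrightarrow> par_e e e' \<Longrightarrow> par_e v v' \<Longrightarrow>
     par_e (App (Lam t e) v) (inst e' v')"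
| par_eq1: "par_e (App (Const (CEq b)) (Const c1)) (Const (CEqC c1 b))"
| par_eq2: "par_e (App (Const (CEqC c1 b)) (Const c2)) (Const (eq_result c1 c2))"
| par_beq: "par_e l l' \<Longrightarrow> par_e r r' \<Longrightarrow> par_e e e' \<Longrightarrow>
     par_e (BEq b l r e) (BEq b l' r' e')"
| par_xeq: "par_t tx tx' \<Longrightarrow> par_t t t' \<Longrightarrow> par_e l l' \<Longrightarrow> par_e r r' \<Longrightarrow> par_e e e' \<Longrightarrow>
     par_e (XEq tx t l r e) (XEq tx' t' l' r' e')"
| par_tref: "par_e r r' \<Longrightarrow> par_t (TRef b r) (TRef b r')"
| par_tfun: "par_t tx tx' \<Longrightarrow> par_t t t' \<Longrightarrow> par_t (TFun tx t) (TFun tx' t')"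
| par_peq: "par_t t t' \<Longrightarrow> par_e l l' \<Longrightarrow> par_e r r' \<Longrightarrow> par_t (PEq t l r) (PEq t' l' r')"

end

theory Submission
  imports Defs
begin

text \<open>
  Forward: a step \<open>e \<rightarrow> f\<close> is matched from any \<open>e \<Rrightarrow> e'\<close> by some
  \<open>e' \<rightarrow>\<^sup>* f'\<close> with \<open>f \<Rrightarrow> f'\<close>; the \<open>\<beta>\<close>-case is the substitution property of \<open>\<Rrightarrow>\<close>.
  Backward: if \<open>e \<Rrightarrow> e'\<close> and \<open>e' \<rightarrow> f'\<close>, then \<open>e \<rightarrow>\<^sup>* f\<close> with \<open>f \<Rrightarrow> f'\<close>. When the
  derivation of \<open>e \<Rrightarrow> e'\<close> contracts a \<open>\<beta>\<close>-redex at the root, \<open>e\<close> performs that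
  \<open>\<beta>\<close>-step itself and the proof continues from the contractum. This terminates
  because, once the argument's derivation is counted once per occurrence of the bound
  variable, the contractum's derivation weighs strictly less than the redex's.
  Since a value that parallel-reduces to a constant is that constant, both directions
  transfer \<open>\<rightarrow>\<^sup>* c\<close>, and the corollary follows by induction along \<open>\<Rrightarrow>\<^sup>*\<close>.
\<close>

section \<open>Substitution on de Bruijn terms\<close>

lemma lift_lift:
  "j \<le> i \<Longrightarrow> lift_e j (lift_e i e) = lift_e (Suc i) (lift_e j e)"
  "j \<le> i \<Longrightarrow> lift_t j (lift_t i t) = lift_t (Suc i) (lift_t j t)"
  by (induct e and t arbitrary: i j and i j) auto

lemma lift_subst_below:
  "i \<le> k \<Longrightarrow> lift_e i (subst_e k s e) = subst_e (Suc k) (lift_e i s) (lift_e i e)"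
  "i \<le> k \<Longrightarrow> lift_t i (subst_t k s t) = subst_t (Suc k) (lift_e i s) (lift_t i t)"
  by (induct e and t arbitrary: i k s and i k s) (auto simp: lift_lift)

lemma lift_subst_above:
  "k \<le> i \<Longrightarrow> lift_e i (subst_e k s e) = subst_e k (lift_e i s) (lift_e (Suc i) e)"
  "k \<le> i \<Longrightarrow> lift_t i (subst_t k s t) = subst_t k (lift_e i s) (lift_t (Suc i) t)"
  by (induct e and t arbitrary: i k s and i k s) (auto simp: lift_lift)

lemma subst_lift:
  "subst_e j w (lift_e j e) = e"
  "subst_t j w (lift_t j t) = t"
  by (induct e and t arbitrary: j w and j w) auto

lemma subst_subst:
  "j \<le> k \<Longrightarrow>
     subst_e k s (subst_e j w e) = subst_e j (subst_e k s w) (subst_e (Suc k) (lift_e j s) e)"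
  "j \<le> k \<Longrightarrow>
     subst_t k s (subst_t j w t) = subst_t j (subst_e k s w) (subst_t (Suc k) (lift_e j s) t)"
  by (induct e and t arbitrary: j k s w and j k s w)
    (auto simp: lift_lift lift_subst_below subst_lift)

primrec occs_e :: "nat \<Rightarrow> expr \<Rightarrow> nat" and occs_t :: "nat \<Rightarrow> ty \<Rightarrow> nat" where
  "occs_e k (Const c) = 0"
| "occs_e k (Var i) = (if i = k then 1 else 0)"
| "occs_e k (App e1 e2) = occs_e k e1 + occs_e k e2"
| "occs_e k (Lam t e) = occs_t k t + occs_e (Suc k) e"
| "occs_e k (BEq b l r e) = occs_e k l + occs_e k r + occs_e k e"
| "occs_e k (XEq tx t l r e) =
     occs_t k tx + occs_t (Suc k) t + occs_e k l + occs_e k r + occs_e k e"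
| "occs_t k (TRef b r) = occs_e (Suc k) r"
| "occs_t k (TFun tx t) = occs_t k tx + occs_t (Suc k) t"
| "occs_t k (PEq t l r) = occs_t k t + occs_e k l + occs_e k r"

lemma occs_lift:
  "occs_e i (lift_e j e) = (if i < j then occs_e i e else if i = j then 0 else occs_e (i - 1) e)"
  "occs_t i (lift_t j t) = (if i < j then occs_t i t else if i = j then 0 else occs_t (i - 1) t)"
  by (induct e and t arbitrary: i j and i j) auto

lemma occs_subst:
  "occs_e i (subst_e k s e) =
     (if i < k then occs_e i e else occs_e (Suc i) e) + occs_e k e * occs_e i s"
  "occs_t i (subst_t k s t) =
     (if i < k then occs_t i t else occs_t (Suc i) t) + occs_t k t * occs_e i s"
  by (induct e and t arbitrary: i k s and i k s) (auto simp: occs_lift algebra_simps)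

lemma is_value_simps [simp]:
  "is_value (Const c)" "is_value (Lam t e)" "\<not> is_value (Var x)" "\<not> is_value (App e1 e2)"
  "is_value (BEq b l r v) \<longleftrightarrow> is_value v" "is_value (XEq tx t l r v) \<longleftrightarrow> is_value v"
  by (auto intro: is_value.intros elim: is_value.cases)

lemma is_value_lift: "is_value v \<Longrightarrow> is_value (lift_e k v)"
  by (induct rule: is_value.induct) auto

lemma is_value_subst: "is_value v \<Longrightarrow> is_value (subst_e k s v)"
  by (induct rule: is_value.induct) auto

lemma value_no_step: "is_value v \<Longrightarrow> \<not> step v e"
  by (induct arbitrary: e rule: is_value.induct) (auto elim: step.cases)

lemma par_Const_iff [simp]: "par_e (Const c) e \<longleftrightarrow> e = Const c"
  by (auto elim: par_e.cases intro: par_const)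

lemma par_LamE:
  assumes "par_e (Lam t b) e"
  obtains t' b' where "e = Lam t' b'" "par_e b b'"
  using assms by (auto elim: par_e.cases)

lemma par_is_value: "is_value v \<Longrightarrow> par_e v v' \<Longrightarrow> is_value v'"
  by (induct arbitrary: v' rule: is_value.induct) (erule par_e.cases; auto intro: is_value.intros)+

section \<open>Parallel reduction within a weight budget\<close>

text \<open>
  \<open>par_sized_e e e' n\<close>: \<open>e \<Rrightarrow> e'\<close> has a derivation of weight at most \<open>n\<close>, where in the
  \<open>\<beta>\<close>-rule the weight of the argument's derivation counts once per occurrence of the
  bound variable. This weighting is what makes \<open>par_sized_subst\<close> hold with an additive
  bound, so that the contractum of a root \<open>\<beta>\<close>-redex stays within a smaller budget.
\<close>

inductive par_sized_e :: "expr \<Rightarrow> expr \<Rightarrow> nat \<Rightarrow> bool"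
  and par_sized_t :: "ty \<Rightarrow> ty \<Rightarrow> nat \<Rightarrow> bool" where
  ps_var: "par_sized_e (Var x) (Var x) n"
| ps_const: "par_sized_e (Const c) (Const c) n"
| ps_lam: "par_sized_t t t' n1 \<Longrightarrow> par_sized_e e e' n2 \<Longrightarrow> n1 + n2 < n \<Longrightarrow>
     par_sized_e (Lam t e) (Lam t' e') n"
| ps_app: "par_sized_e e1 e1' n1 \<Longrightarrow> par_sized_e e2 e2' n2 \<Longrightarrow> n1 + n2 < n \<Longrightarrow>
     par_sized_e (App e1 e2) (App e1' e2') n"
| ps_beta: "is_value v \<Longrightarrow> par_sized_e e e' n1 \<Longrightarrow> par_sized_e v v' n2 \<Longrightarrow>
     n1 + occs_e 0 e' * n2 < n \<Longrightarrow> par_sized_e (App (Lam t e) v) (inst e' v') n"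
| ps_eq1: "par_sized_e (App (Const (CEq b)) (Const c1)) (Const (CEqC c1 b)) n"
| ps_eq2: "par_sized_e (App (Const (CEqC c1 b)) (Const c2)) (Const (eq_result c1 c2)) n"
| ps_beq: "par_sized_e l l' n1 \<Longrightarrow> par_sized_e r r' n2 \<Longrightarrow> par_sized_e e e' n3 \<Longrightarrow>
     n1 + n2 + n3 < n \<Longrightarrow> par_sized_e (BEq b l r e) (BEq b l' r' e') n"
| ps_xeq: "par_sized_t tx tx' n1 \<Longrightarrow> par_sized_t t t' n2 \<Longrightarrow> par_sized_e l l' n3 \<Longrightarrow>
     par_sized_e r r' n4 \<Longrightarrow> par_sized_e e e' n5 \<Longrightarrow> n1 + n2 + n3 + n4 + n5 < n \<Longrightarrow>
     par_sized_e (XEq tx t l r e) (XEq tx' t' l' r' e') n"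
| ps_tref: "par_sized_e r r' n1 \<Longrightarrow> n1 < n \<Longrightarrow> par_sized_t (TRef b r) (TRef b r') n"
| ps_tfun: "par_sized_t tx tx' n1 \<Longrightarrow> par_sized_t t t' n2 \<Longrightarrow> n1 + n2 < n \<Longrightarrow>
     par_sized_t (TFun tx t) (TFun tx' t') n"
| ps_peq: "par_sized_t t t' n1 \<Longrightarrow> par_sized_e l l' n2 \<Longrightarrow> par_sized_e r r' n3 \<Longrightarrow>
     n1 + n2 + n3 < n \<Longrightarrow> par_sized_t (PEq t l r) (PEq t' l' r') n"

lemma par_sized_mono:
  "par_sized_e e e' n \<Longrightarrow> n \<le> m \<Longrightarrow> par_sized_e e e' m"
  "par_sized_t t t' n \<Longrightarrow> n \<le> m \<Longrightarrow> par_sized_t t t' m"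
  by (erule par_sized_e.cases par_sized_t.cases; force intro: par_sized_e_par_sized_t.intros)+

lemma par_sized_imp_par:
  "par_sized_e e e' n \<Longrightarrow> par_e e e'"
  "par_sized_t t t' n \<Longrightarrow> par_t t t'"
  by (induct rule: par_sized_e_par_sized_t.inducts) (auto intro: par_e_par_t.intros)

lemma par_imp_par_sized:
  "par_e e e' \<Longrightarrow> \<exists>n. par_sized_e e e' n"
  "par_t t t' \<Longrightarrow> \<exists>n. par_sized_t t t' n"
  by (induct rule: par_e_par_t.inducts) (blast intro: par_sized_e_par_sized_t.intros)+

lemma par_sized_lift:
  "par_sized_e e e' n \<Longrightarrow> par_sized_e (lift_e k e) (lift_e k e') n"
  "par_sized_t t t' n \<Longrightarrow> par_sized_t (lift_t k t) (lift_t k t') n"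
proof (induct arbitrary: k and k rule: par_sized_e_par_sized_t.inducts)
  case (ps_beta v e e' n1 v' n2 n t)
  have "lift_e k (inst e' v') = inst (lift_e (Suc k) e') (lift_e k v')"
    by (simp add: inst_def lift_subst_above)
  moreover have "occs_e 0 (lift_e (Suc k) e') = occs_e 0 e'"
    by (simp add: occs_lift)
  ultimately show ?case
    using ps_beta by (auto intro!: par_sized_e_par_sized_t.ps_beta is_value_lift)
qed (auto intro!: par_sized_e_par_sized_t.intros)


lemma par_sized_subst:
  "par_sized_e e e' n \<Longrightarrow> par_sized_e s s' m \<Longrightarrow>
     par_sized_e (subst_e k s e) (subst_e k s' e') (n + occs_e k e' * m)"
  "par_sized_t t t' n \<Longrightarrow> par_sized_e s s' m \<Longrightarrow>
     par_sized_t (subst_t k s t) (subst_t k s' t') (n + occs_t k t' * m)"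
proof (induct arbitrary: k s s' m and k s s' m rule: par_sized_e_par_sized_t.inducts)
  case (ps_var x n)
  then show ?case by (auto intro: par_sized_mono par_sized_e_par_sized_t.ps_var)
next
  case (ps_beta v e e' n1 v' n2 n t)
  have "par_sized_e (lift_e 0 s) (lift_e 0 s') m"
    using ps_beta.prems by (rule par_sized_lift)
  then have body: "par_sized_e (subst_e (Suc k) (lift_e 0 s) e) (subst_e (Suc k) (lift_e 0 s') e')
      (n1 + occs_e (Suc k) e' * m)"
    by (rule ps_beta.hyps(3))
  have arg: "par_sized_e (subst_e k s v) (subst_e k s' v') (n2 + occs_e k v' * m)"
    using ps_beta.prems by (rule ps_beta.hyps(5))
  have "subst_e k s' (inst e' v') = inst (subst_e (Suc k) (lift_e 0 s') e') (subst_e k s' v')"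
    by (simp add: inst_def subst_subst)
  moreover have "occs_e 0 (subst_e (Suc k) (lift_e 0 s') e') = occs_e 0 e'"
    by (simp add: occs_subst occs_lift)
  moreover have "occs_e k (inst e' v') = occs_e (Suc k) e' + occs_e 0 e' * occs_e k v'"
    by (simp add: inst_def occs_subst)
  ultimately show ?case
    using ps_beta.hyps(1,6) body arg
    by (auto intro!: par_sized_e_par_sized_t.ps_beta is_value_subst simp: algebra_simps)
next
  case ps_const
  then show ?case by (simp add: par_sized_e_par_sized_t.ps_const)
next
  case ps_eq1
  then show ?case by (simp add: par_sized_e_par_sized_t.ps_eq1)
next
  case ps_eq2
  then show ?case by (simp add: par_sized_e_par_sized_t.ps_eq2)
next
  case ps_lam
  show ?case
    unfolding subst_e.simps subst_t.simps occs_e.simps occs_t.simps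
    by (rule par_sized_e_par_sized_t.intros, (rule ps_lam.hyps ps_lam.prems par_sized_lift)+)
      (use ps_lam.hyps in \<open>simp add: algebra_simps\<close>)
next
  case ps_app
  show ?case
    unfolding subst_e.simps subst_t.simps occs_e.simps occs_t.simps
    by (rule par_sized_e_par_sized_t.intros, (rule ps_app.hyps ps_app.prems par_sized_lift)+)
      (use ps_app.hyps in \<open>simp add: algebra_simps\<close>)
next
  case ps_beq
  show ?case
    unfolding subst_e.simps subst_t.simps occs_e.simps occs_t.simps
    by (rule par_sized_e_par_sized_t.intros, (rule ps_beq.hyps ps_beq.prems par_sized_lift)+)
      (use ps_beq.hyps in \<open>simp add: algebra_simps\<close>)
next
  case ps_xeq
  show ?case
    unfolding subst_e.simps subst_t.simps occs_e.simps occs_t.simps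
    by (rule par_sized_e_par_sized_t.intros, (rule ps_xeq.hyps ps_xeq.prems par_sized_lift)+)
      (use ps_xeq.hyps in \<open>simp add: algebra_simps\<close>)
next
  case ps_tref
  show ?case
    unfolding subst_e.simps subst_t.simps occs_e.simps occs_t.simps
    by (rule par_sized_e_par_sized_t.intros, (rule ps_tref.hyps ps_tref.prems par_sized_lift)+)
      (use ps_tref.hyps in \<open>simp add: algebra_simps\<close>)
next
  case ps_tfun
  show ?case
    unfolding subst_e.simps subst_t.simps occs_e.simps occs_t.simps
    by (rule par_sized_e_par_sized_t.intros, (rule ps_tfun.hyps ps_tfun.prems par_sized_lift)+)
      (use ps_tfun.hyps in \<open>simp add: algebra_simps\<close>)
next
  case ps_peq
  show ?case
    unfolding subst_e.simps subst_t.simps occs_e.simps occs_t.simps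
    by (rule par_sized_e_par_sized_t.intros, (rule ps_peq.hyps ps_peq.prems par_sized_lift)+)
      (use ps_peq.hyps in \<open>simp add: algebra_simps\<close>)
qed

lemma par_sized_inst:
  "par_sized_e b b' n \<Longrightarrow> par_sized_e v v' m \<Longrightarrow>
     par_sized_e (inst b v) (inst b' v') (n + occs_e 0 b' * m)"
  unfolding inst_def by (rule par_sized_subst)

lemma par_inst: "par_e b b' \<Longrightarrow> par_e v v' \<Longrightarrow> par_e (inst b v) (inst b' v')"
  by (meson par_imp_par_sized(1) par_sized_imp_par(1) par_sized_inst)

section \<open>Simulation of reduction\<close>

lemma rtranclp_congruence:
  assumes "\<And>x y. r x y \<Longrightarrow> r (f x) (f y)" and "r\<^sup>*\<^sup>* a b"
  shows "r\<^sup>*\<^sup>* (f a) (f b)"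
  using assms(2) by induct (auto intro: rtranclp.rtrancl_into_rtrancl assms(1))

lemma steps_App_left: "step\<^sup>*\<^sup>* e f \<Longrightarrow> step\<^sup>*\<^sup>* (App e e2) (App f e2)"
  by (rule rtranclp_congruence) (rule step_app1)

lemma steps_App_right: "is_value v \<Longrightarrow> step\<^sup>*\<^sup>* e f \<Longrightarrow> step\<^sup>*\<^sup>* (App v e) (App v f)"
  by (rule rtranclp_congruence) (rule step_app2)

lemma steps_App_values:
  "step\<^sup>*\<^sup>* e1 v1 \<Longrightarrow> is_value v1 \<Longrightarrow> step\<^sup>*\<^sup>* e2 v2 \<Longrightarrow> step\<^sup>*\<^sup>* (App e1 e2) (App v1 v2)"
  by (meson rtranclp_trans steps_App_left steps_App_right)

lemma steps_BEq: "step\<^sup>*\<^sup>* e f \<Longrightarrow> step\<^sup>*\<^sup>* (BEq b l r e) (BEq b l r f)"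
  by (rule rtranclp_congruence) (rule step_beq)

lemma steps_XEq: "step\<^sup>*\<^sup>* e f \<Longrightarrow> step\<^sup>*\<^sup>* (XEq tx t l r e) (XEq tx t l r f)"
  by (rule rtranclp_congruence) (rule step_xeq)

lemma par_step_simulation:
  "step e f \<Longrightarrow> par_e e e' \<Longrightarrow> \<exists>f'. par_e f f' \<and> step\<^sup>*\<^sup>* e' f'"
proof (induct arbitrary: e' rule: step.induct)
  case (step_app1 e1 g e2)
  from step_app1.prems show ?case
  proof (cases rule: par_e.cases)
    case (par_app e1' e2')
    then obtain g' where "par_e g g'" "step\<^sup>*\<^sup>* e1' g'" using step_app1 by blast
    then show ?thesis using par_app by (blast intro: par_e_par_t.par_app steps_App_left)
  qed (use step_app1 value_no_step in \<open>auto\<close>)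
    \<comment> \<open>the other rules need a value in function position\<close>
next
  case (step_app2 v e2 g)
  from step_app2.prems show ?case
  proof (cases rule: par_e.cases)
    case (par_app v' e2')
    then obtain g' where "par_e g g'" "step\<^sup>*\<^sup>* e2' g'" using step_app2 by blast
    then show ?thesis
      using par_app step_app2 by (blast intro: par_e_par_t.par_app steps_App_right par_is_value)
  qed (use step_app2 value_no_step in \<open>auto\<close>)
next
  case (step_beta v t b)
  from step_beta.prems show ?case
  proof (cases rule: par_e.cases)
    case (par_app L' v')
    then obtain t' b' where "L' = Lam t' b'" "par_e b b'" by (auto elim: par_LamE)
    moreover have "is_value v'" using par_app step_beta par_is_value by blast
    ultimately show ?thesis
      using par_app by (blast intro: par_inst step.step_beta)
  qed (auto intro: par_inst)
next
  case (step_beq e g b l r)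
  from step_beq.prems show ?case
  proof (cases rule: par_e.cases)
    case (par_beq l' r' e'')
    then obtain g' where "par_e g g'" "step\<^sup>*\<^sup>* e'' g'" using step_beq.hyps by blast
    then show ?thesis using par_beq by (blast intro: par_e_par_t.par_beq steps_BEq)
  qed
next
  case (step_xeq e g tx t l r)
  from step_xeq.prems show ?case
  proof (cases rule: par_e.cases)
    case (par_xeq tx' t' l' r' e'')
    then obtain g' where "par_e g g'" "step\<^sup>*\<^sup>* e'' g'" using step_xeq.hyps by blast
    then show ?thesis using par_xeq by (blast intro: par_e_par_t.par_xeq steps_XEq)
  qed
next
  case step_eq1
  from step_eq1.prems show ?case
    by (cases rule: par_e.cases) (auto intro: step.step_eq1)
next
  case step_eq2
  from step_eq2.prems show ?case
    by (cases rule: par_e.cases) (auto intro: step.step_eq2)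
qed

lemma par_steps_simulation:
  assumes "step\<^sup>*\<^sup>* e f" and "par_e e e'"
  shows "\<exists>f'. par_e f f' \<and> step\<^sup>*\<^sup>* e' f'"
  using assms(1)
proof induct
  case (step g f)
  then obtain g' where "par_e g g'" "step\<^sup>*\<^sup>* e' g'" by blast
  then show ?case using par_step_simulation[OF step(2)] by (meson rtranclp_trans)
qed (use assms(2) in blast)

lemma par_preserves_steps_Const:
  "step\<^sup>*\<^sup>* e (Const c) \<Longrightarrow> par_e e e' \<Longrightarrow> step\<^sup>*\<^sup>* e' (Const c)"
  using par_steps_simulation by fastforce

lemma value_par_ConstD: "is_value v \<Longrightarrow> par_e v (Const c) \<Longrightarrow> v = Const c"
  by (auto elim: is_value.cases par_e.cases)

lemma value_par_LamE:
  assumes "is_value v" and "par_e v (Lam t' b')"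
  obtains t b where "v = Lam t b" and "par_e b b'"
  using assms by (auto elim: is_value.cases par_e.cases)

lemma par_sized_steps_to_value:
  "par_sized_e e w n \<Longrightarrow> is_value w \<Longrightarrow> \<exists>v. step\<^sup>*\<^sup>* e v \<and> is_value v \<and> par_e v w"
proof (induct n arbitrary: e w rule: less_induct)
  case (less n)
  from less.prems(1) show ?case
  proof (cases rule: par_sized_e.cases)
    case (ps_beta v b b' n1 v' n2 t)
    then have "par_sized_e (inst b v) w (n1 + occs_e 0 b' * n2)"
      using par_sized_inst by blast
    with less ps_beta obtain u where "step\<^sup>*\<^sup>* (inst b v) u" "is_value u" "par_e u w"
      by blast
    moreover have "step e (inst b v)" using ps_beta by (simp add: step.step_beta)
    ultimately show ?thesis by (meson converse_rtranclp_into_rtranclp)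
  next
    case (ps_beq l l' n1 r r' n2 e0 e0' n3 b)
    have "n3 < n" "is_value e0'" using ps_beq less.prems by auto
    then obtain u where "step\<^sup>*\<^sup>* e0 u" "is_value u" "par_e u e0'"
      using less.hyps ps_beq by blast
    then show ?thesis
      using ps_beq by (blast intro: par_beq steps_BEq par_sized_imp_par is_value.intros)
  next
    case (ps_xeq tx tx' n1 t t' n2 l l' n3 r r' n4 e0 e0' n5)
    have "n5 < n" "is_value e0'" using ps_xeq less.prems by auto
    then obtain u where "step\<^sup>*\<^sup>* e0 u" "is_value u" "par_e u e0'"
      using less.hyps ps_xeq by blast
    then show ?thesis
      using ps_xeq by (blast intro: par_xeq steps_XEq par_sized_imp_par is_value.intros)
  next
    case ps_eq1
    then show ?thesis by (metis is_value_simps(1) par_const r_into_rtranclp step_eq1)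
  next
    case ps_eq2
    then show ?thesis by (metis is_value_simps(1) par_const r_into_rtranclp step_eq2)
  qed (use less.prems in \<open>auto intro: par_e_par_t.intros par_sized_imp_par\<close>)
qed

lemma par_sized_steps_to_Const: "par_sized_e e (Const c) n \<Longrightarrow> step\<^sup>*\<^sup>* e (Const c)"
  by (metis is_value_simps(1) par_sized_steps_to_value value_par_ConstD)

lemma App_step_backward:
  assumes step1: "\<And>g'. step e1' g' \<Longrightarrow> \<exists>g. step\<^sup>*\<^sup>* e1 g \<and> par_e g g'"
    and step2: "\<And>g'. step e2' g' \<Longrightarrow> \<exists>g. step\<^sup>*\<^sup>* e2 g \<and> par_e g g'"
    and par1: "par_sized_e e1 e1' n1" and par2: "par_sized_e e2 e2' n2"
    and "step (App e1' e2') f'"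
  shows "\<exists>f. step\<^sup>*\<^sup>* (App e1 e2) f \<and> par_e f f'"
  using assms(5)
proof (cases rule: step.cases)
  case (step_app1 g')
  then obtain g where "step\<^sup>*\<^sup>* e1 g" "par_e g g'" using step1 by blast
  then show ?thesis
    using step_app1 par2 by (blast intro: par_app steps_App_left par_sized_imp_par)
next
  case (step_app2 g')
  then obtain v1 where "step\<^sup>*\<^sup>* e1 v1" "is_value v1" "par_e v1 e1'"
    using par1 par_sized_steps_to_value by blast
  moreover obtain g where "step\<^sup>*\<^sup>* e2 g" "par_e g g'" using step_app2 step2 by blast
  ultimately show ?thesis
    using step_app2 by (blast intro: par_app steps_App_values)
next
  case (step_beta t' b')
  then obtain v1 where v1: "step\<^sup>*\<^sup>* e1 v1" "is_value v1" "par_e v1 (Lam t' b')"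
    using par1 par_sized_steps_to_value by fastforce
  obtain t b where "v1 = Lam t b" "par_e b b'" using v1(2,3) by (rule value_par_LamE)
  moreover obtain v2 where v2: "step\<^sup>*\<^sup>* e2 v2" "is_value v2" "par_e v2 e2'"
    using step_beta par2 par_sized_steps_to_value by blast
  ultimately have "step\<^sup>*\<^sup>* (App e1 e2) (App (Lam t b) v2)"
    using v1 v2 steps_App_values by blast
  then have "step\<^sup>*\<^sup>* (App e1 e2) (inst b v2)"
    using v2 by (simp add: rtranclp.rtrancl_into_rtrancl step.step_beta)
  then show ?thesis
    using step_beta v2 \<open>par_e b b'\<close> by (blast intro: par_inst)
next
  case (step_eq1 b c1)
  then have "step\<^sup>*\<^sup>* (App e1 e2) (App e1' e2')"
    using par1 par2 by (simp add: par_sized_steps_to_Const steps_App_values)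
  then show ?thesis
    using step_eq1 by (metis rtranclp.rtrancl_into_rtrancl step.step_eq1 par_const)
next
  case (step_eq2 c1 b c2)
  then have "step\<^sup>*\<^sup>* (App e1 e2) (App e1' e2')"
    using par1 par2 by (simp add: par_sized_steps_to_Const steps_App_values)
  then show ?thesis
    using step_eq2 by (metis rtranclp.rtrancl_into_rtrancl step.step_eq2 par_const)
qed

lemma par_sized_step_backward:
  "par_sized_e e e' n \<Longrightarrow> step e' f' \<Longrightarrow> \<exists>f. step\<^sup>*\<^sup>* e f \<and> par_e f f'"
proof (induct n arbitrary: e e' f' rule: less_induct)
  case (less n)
  from less.prems(1) show ?case
  proof (cases rule: par_sized_e.cases)
    case (ps_app e1 e1' n1 e2 e2' n2)
    have "n1 < n" "n2 < n" using ps_app by auto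
    then have "\<And>g'. step e1' g' \<Longrightarrow> \<exists>g. step\<^sup>*\<^sup>* e1 g \<and> par_e g g'"
      and "\<And>g'. step e2' g' \<Longrightarrow> \<exists>g. step\<^sup>*\<^sup>* e2 g \<and> par_e g g'"
      using less.hyps ps_app by blast+
    from App_step_backward[OF this] show ?thesis
      using ps_app less.prems(2) by blast
  next
    case (ps_beta v b b' n1 v' n2 t)
    then have "par_sized_e (inst b v) e' (n1 + occs_e 0 b' * n2)"
      using par_sized_inst by blast
    with less ps_beta obtain f where "step\<^sup>*\<^sup>* (inst b v) f" "par_e f f'"
      by blast
    moreover have "step e (inst b v)" using ps_beta by (simp add: step.step_beta)
    ultimately show ?thesis by (meson converse_rtranclp_into_rtranclp)
  next
    case (ps_beq l l' n1 r r' n2 e0 e0' n3 b)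
    from less.prems(2) obtain g' where "step e0' g'" "f' = BEq b l' r' g'"
      unfolding ps_beq by (cases rule: step.cases) auto
    moreover have "n3 < n" using ps_beq by simp
    ultimately obtain g where "step\<^sup>*\<^sup>* e0 g" "par_e g g'" using less.hyps ps_beq by blast
    then show ?thesis
      using ps_beq \<open>f' = _\<close> by (blast intro: par_beq steps_BEq par_sized_imp_par)
  next
    case (ps_xeq tx tx' n1 t t' n2 l l' n3 r r' n4 e0 e0' n5)
    from less.prems(2) obtain g' where "step e0' g'" "f' = XEq tx' t' l' r' g'"
      unfolding ps_xeq by (cases rule: step.cases) auto
    moreover have "n5 < n" using ps_xeq by simp
    ultimately obtain g where "step\<^sup>*\<^sup>* e0 g" "par_e g g'" using less.hyps ps_xeq by blast
    then show ?thesis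
      using ps_xeq \<open>f' = _\<close> by (blast intro: par_xeq steps_XEq par_sized_imp_par)
  qed (use less.prems(2) in \<open>auto elim: step.cases\<close>)
qed

lemma par_reflects_steps_Const:
  "step\<^sup>*\<^sup>* e' (Const c) \<Longrightarrow> par_e e e' \<Longrightarrow> step\<^sup>*\<^sup>* e (Const c)"
proof (induct arbitrary: e rule: converse_rtranclp_induct)
  case base
  then show ?case by (metis par_imp_par_sized(1) par_sized_steps_to_Const)
next
  case (step e' f')
  then obtain n where "par_sized_e e e' n" using par_imp_par_sized(1) by blast
  then obtain f where "step\<^sup>*\<^sup>* e f" "par_e f f'" using par_sized_step_backward step by blast
  then show ?case using step.hyps(3) by (meson rtranclp_trans)
qed

theorem corollaryC17:
  assumes "par_e\<^sup>*\<^sup>* e1 e2"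
  shows "\<forall>c. step\<^sup>*\<^sup>* e1 (Const c) \<longleftrightarrow> step\<^sup>*\<^sup>* e2 (Const c)"
  using assms
proof induct
  case (step e e')
  then show ?case using par_preserves_steps_Const par_reflects_steps_Const by blast
qed simp

end
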